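(* Let $s>0$, $\kappa>0$, and put $q=e^{-2s\kappa^2}\in(0,1)$. Let $b\in\mathbb{C}$ and $n\ge0$. Then for every $y\in\mathbb{R}$, $$\frac{1}{\sqrt{2\pi s}}\int_{\mathbb{R}}H_n\big(b\,e^{i\kappa x},s\,\big|\,q\big)\,e^{ixy-\frac{x^2}{2s}}\,dx=q^{\frac{n^2}{4}}\,H_n\big(b\,e^{-s\kappa y},\,q^{n-3}s\,\big|\,q^{-1}\big)\,e^{-\frac{sy^2}{2}}.$$
   Context: For $r>0$, $r\neq1$ and $m\ge0$: $\{m\}_r=\frac{1-r^m}{1-r}$, $\{m\}_r!=\prod_{j=1}^m\{j\}_r$, $\{2m\}_r!!=\prod_{j=1}^m\{2j\}_r$, $\{0\}_r!=\{0\}_r!!=1$. For $0\le k\le\lfloor n/2\rfloor$, $c_{n,k}(r)=\frac{(-1)^kr^{k(k-1)}\{n\}_r!}{\{n-2k\}_r!\,\{2k\}_r!!}$, and $$H_n(z,s|r)=\sum_{k=0}^{\lfloor n/2\rfloor}c_{n,k}(r)\,s^kz^{n-2k}\quad(z\in\mathbb{C});$$ the left side uses $r=q$, the right side uses $r=q^{-1}$. *)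

theory Defs
  imports "HOL-Analysis.Analysis"
begin

definition qnum :: "real \<Rightarrow> nat \<Rightarrow> real" where
  "qnum r m = (1 - r ^ m) / (1 - r)"

definition qfact :: "real \<Rightarrow> nat \<Rightarrow> real" where
  "qfact r m = (\<Prod>j=1..m. qnum r j)"

definition qdfact :: "real \<Rightarrow> nat \<Rightarrow> real" where
  "qdfact r m = (\<Prod>j=1..m. qnum r (2 * j))"

definition hcoef :: "real \<Rightarrow> nat \<Rightarrow> nat \<Rightarrow> real" where
  "hcoef r n k = (-1) ^ k * r ^ (k * (k - 1)) * qfact r n
                 / (qfact r (n - 2 * k) * qdfact r k)"

definition qHermite :: "nat \<Rightarrow> complex \<Rightarrow> complex \<Rightarrow> real \<Rightarrow> complex" where
  "qHermite n z s r = (\<Sum>k\<le>n div 2. complex_of_real (hcoef r n k) * s ^ k * z ^ (n - 2 * k))"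

end

theory Submission
  imports Defs "HOL-Probability.Probability"
begin

text \<open>
  The polynomial H_n(z, s | r) is a finite sum of monomials z^(n-2k), so substituting
  z = b e^(i kappa x) turns the integrand into a finite linear combination of Gaussian
  chirps e^(i a x - x^2/(2s)) with frequencies a = (n-2k) kappa + y.

  (1) Analysis: the integral of a Gaussian chirp equals sqrt(2 pi s) e^(-s a^2/2); this is
      the characteristic function of the standard normal distribution after rescaling.
      By linearity this gives the transform of H_n for an arbitrary base r.

  (2) Algebra: inverting the base, r \<mapsto> 1/r, multiplies the coefficient c_(n,k) by the
      power r^(k^2 - 2nk + 3k); completing the square writes e^(-s((n-2k) kappa + y)^2/2)
      as q^((n-2k)^2/4) (e^(-s kappa y))^(n-2k) e^(-s y^2/2) with q = e^(-2 s kappa^2).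
      Together they match each summand with the corresponding summand of the right-hand side.
\<close>

lemma std_normal_char_integral:
  fixes t :: real
  shows "integrable lborel (\<lambda>u. std_normal_density u *\<^sub>R iexp (t * u))"
    and "(LINT u|lborel. std_normal_density u *\<^sub>R iexp (t * u)) = complex_of_real (exp (- t\<^sup>2 / 2))"
proof -
  have meas: "(\<lambda>u. iexp (t * u)) \<in> borel_measurable lborel" by measurable
  have "integrable std_normal_distribution (\<lambda>u. iexp (t * u))"
    using real_dist_normal_dist by (intro prob_space.integrable_iexp) (auto simp: real_distribution_def)
  then show "integrable lborel (\<lambda>u. std_normal_density u *\<^sub>R iexp (t * u))"
    by (subst (asm) integrable_density) (auto simp: normal_density_nonneg meas)
  show "(LINT u|lborel. std_normal_density u *\<^sub>R iexp (t * u)) = complex_of_real (exp (- t\<^sup>2 / 2))"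
    using char_std_normal_distribution unfolding char_def
    by (subst (asm) integral_density) (auto simp: normal_density_nonneg meas dest: fun_cong[where x=t])
qed

definition gauss_chirp :: "real \<Rightarrow> real \<Rightarrow> real \<Rightarrow> complex" where
  "gauss_chirp v a x = exp (\<i> * complex_of_real (a * x) - complex_of_real (x\<^sup>2 / (2 * v)))"

lemma gauss_chirp_rescaled:
  assumes "v > 0"
  shows "gauss_chirp v a (sqrt v * u)
           = complex_of_real (sqrt (2 * pi)) * (std_normal_density u *\<^sub>R iexp (a * sqrt v * u))"
proof -
  have sq: "(sqrt v * u)\<^sup>2 / (2 * v) = u\<^sup>2 / 2"
    using assms by (simp add: power_mult_distrib)
  have dens: "sqrt (2 * pi) * std_normal_density u = exp (- (u\<^sup>2 / 2))"
    by (simp add: std_normal_density_def)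
  have "gauss_chirp v a (sqrt v * u) = iexp (a * sqrt v * u) * exp (complex_of_real (- (u\<^sup>2 / 2)))"
    unfolding gauss_chirp_def sq by (simp only: diff_conv_add_uminus exp_add of_real_minus mult.assoc)
  also have "\<dots> = complex_of_real (sqrt (2 * pi) * std_normal_density u) * iexp (a * sqrt v * u)"
    unfolding dens exp_of_real by simp
  finally show ?thesis by (simp add: scaleR_conv_of_real mult_ac)
qed

lemma gauss_chirp_integral:
  assumes v: "v > 0"
  shows "integrable lborel (gauss_chirp v a)"
    and "(LINT x|lborel. gauss_chirp v a x) = complex_of_real (sqrt (2 * pi * v) * exp (- v * a\<^sup>2 / 2))"
proof -
  let ?c = "sqrt v"
  have c: "?c > 0" using v by simp
  note resc = gauss_chirp_rescaled[OF v, of a]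
  have "integrable lborel (\<lambda>u. gauss_chirp v a (0 + ?c * u))"
    unfolding add_0 resc by (intro integrable_mult_right std_normal_char_integral(1))
  then show "integrable lborel (gauss_chirp v a)"
    using lborel_integrable_real_affine_iff[of ?c "gauss_chirp v a" 0] c by simp
  have "(LINT x|lborel. gauss_chirp v a x) = ?c *\<^sub>R (LINT u|lborel. gauss_chirp v a (0 + ?c * u))"
    using lborel_integral_real_affine[of ?c "gauss_chirp v a" 0] c by simp
  also have "\<dots> = complex_of_real (?c * sqrt (2 * pi) * exp (- (a * ?c)\<^sup>2 / 2))"
    unfolding add_0 resc integral_mult_right_zero std_normal_char_integral(2)
    by (simp add: scaleR_conv_of_real)
  also have "?c * sqrt (2 * pi) * exp (- (a * ?c)\<^sup>2 / 2) = sqrt (2 * pi * v) * exp (- v * a\<^sup>2 / 2)"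
    using v by (simp add: real_sqrt_mult power_mult_distrib)
  finally show "(LINT x|lborel. gauss_chirp v a x) = complex_of_real (sqrt (2 * pi * v) * exp (- v * a\<^sup>2 / 2))" .
qed

lemma qnum_inverse_base:
  assumes "q > 0" "q \<noteq> 1"
  shows "qnum (1/q) m = q powr (1 - real m) * qnum q m"
proof -
  have "q powr (1 - real m) = q / q ^ m" using assms by (simp add: powr_diff powr_realpow)
  moreover have "q ^ m > 0" using assms by simp
  ultimately show ?thesis using assms unfolding qnum_def
    by (simp add: field_simps power_one_over)
qed

lemma qfact_inverse_base:
  assumes "q > 0" "q \<noteq> 1"
  shows "qfact (1/q) m = q powr (- (real m * (real m - 1) / 2)) * qfact q m"
proof (induction m)
  case 0 then show ?case using assms by (simp add: qfact_def)
next
  case (Suc m)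
  have "qfact (1/q) (Suc m) = qfact (1/q) m * qnum (1/q) (Suc m)"
    by (simp add: qfact_def prod.cl_ivl_Suc)
  also have "\<dots> = (q powr (- (real m * (real m - 1) / 2)) * q powr (1 - real (Suc m)))
                   * (qfact q m * qnum q (Suc m))"
    using Suc assms by (simp add: qnum_inverse_base mult_ac)
  also have "q powr (- (real m * (real m - 1) / 2)) * q powr (1 - real (Suc m))
           = q powr (- (real (Suc m) * (real (Suc m) - 1) / 2))"
    unfolding powr_add[symmetric] by (rule arg_cong[where f="\<lambda>x. q powr x"]) (simp add: field_simps)
  also have "qfact q m * qnum q (Suc m) = qfact q (Suc m)"
    by (simp add: qfact_def prod.cl_ivl_Suc)
  finally show ?case .
qed

lemma qdfact_inverse_base:
  assumes "q > 0" "q \<noteq> 1"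
  shows "qdfact (1/q) m = q powr (- (real m)\<^sup>2) * qdfact q m"
proof (induction m)
  case 0 then show ?case using assms by (simp add: qdfact_def)
next
  case (Suc m)
  have "qdfact (1/q) (Suc m) = qdfact (1/q) m * qnum (1/q) (2 * Suc m)"
    by (simp add: qdfact_def prod.cl_ivl_Suc)
  also have "\<dots> = (q powr (- (real m)\<^sup>2) * q powr (1 - real (2 * Suc m)))
                   * (qdfact q m * qnum q (2 * Suc m))"
    using Suc assms by (simp add: qnum_inverse_base mult_ac)
  also have "q powr (- (real m)\<^sup>2) * q powr (1 - real (2 * Suc m)) = q powr (- (real (Suc m))\<^sup>2)"
    unfolding powr_add[symmetric] by (simp add: field_simps power2_eq_square)
  also have "qdfact q m * qnum q (2 * Suc m) = qdfact q (Suc m)"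
    by (simp add: qdfact_def prod.cl_ivl_Suc)
  finally show ?case .
qed

lemma hcoef_inverse_base:
  assumes q: "q > 0" "q \<noteq> 1" and k: "2 * k \<le> n"
  shows "hcoef (1/q) n k = q powr (real k ^ 2 - 2 * real n * real k + 3 * real k) * hcoef q n k"
proof -
  define P where "P = qfact q n / (qfact q (n - 2 * k) * qdfact q k)"
  have rk: "real (k * (k - 1)) = real k * (real k - 1)" by (cases k) (auto simp: algebra_simps)
  have rn: "real (n - 2 * k) = real n - 2 * real k" using k by simp
  have pow: "r ^ (k * (k - 1)) = r powr (real k * (real k - 1))" if "r > 0" for r
    using that by (metis powr_realpow rk)
  have inv_pow: "(1/q) ^ (k * (k - 1)) = q powr (- (real k * (real k - 1)))"
    unfolding power_one_over pow[OF q(1)] by (simp add: powr_minus_divide)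
  have hcoef_q: "hcoef q n k = (-1) ^ k * P * q powr (real k * (real k - 1))"
    unfolding hcoef_def P_def pow[OF q(1)] by simp
  have "hcoef (1/q) n k = (-1) ^ k * P
      * (q powr (- (real k * (real k - 1))) * q powr (- (real n * (real n - 1) / 2))
         / (q powr (- ((real n - 2 * real k) * (real n - 2 * real k - 1) / 2)) * q powr (- (real k)\<^sup>2)))"
    unfolding hcoef_def P_def qfact_inverse_base[OF q] qdfact_inverse_base[OF q] rn inv_pow
    by (simp add: field_simps)
  also have "\<dots> = (-1) ^ k * P * (q powr (real k ^ 2 - 2 * real n * real k + 3 * real k)
                                   * q powr (real k * (real k - 1)))"
    unfolding powr_add[symmetric] powr_diff[symmetric]
    by (rule arg_cong[where f="\<lambda>e. (-1) ^ k * P * q powr e"]) (simp add: field_simps power2_eq_square)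
  also have "\<dots> = q powr (real k ^ 2 - 2 * real n * real k + 3 * real k) * hcoef q n k"
    unfolding hcoef_q by (simp add: mult_ac)
  finally show ?thesis .
qed

lemma hcoef_reflection:
  assumes q: "q > 0" "q \<noteq> 1" and k: "2 * k \<le> n"
  shows "hcoef q n k * q powr (real (n - 2 * k) ^ 2 / 4)
         = q powr (real n ^ 2 / 4) * hcoef (1/q) n k * (q powr (real n - 3)) ^ k"
proof -
  have "q powr (real n ^ 2 / 4) * q powr (real k ^ 2 - 2 * real n * real k + 3 * real k)
          * (q powr (real n - 3)) ^ k = q powr (real (n - 2 * k) ^ 2 / 4)"
    using q k unfolding powr_power[of q, OF less_imp_neq[OF q(1), symmetric]] powr_add[symmetric]
    by (simp add: of_nat_diff field_simps power2_eq_square)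
  then show ?thesis
    unfolding hcoef_inverse_base[OF q k] by (simp add: mult_ac)
qed

lemma gaussian_completing_square:
  fixes v \<kappa> y :: real and m :: nat
  shows "exp (- v * (real m * \<kappa> + y)\<^sup>2 / 2)
         = exp (- 2 * v * \<kappa>\<^sup>2) powr (real m ^ 2 / 4) * exp (- v * \<kappa> * y) ^ m * exp (- v * y\<^sup>2 / 2)"
proof -
  have "- v * (real m * \<kappa> + y)\<^sup>2 / 2
        = real m ^ 2 / 4 * (- 2 * v * \<kappa>\<^sup>2) + real m * (- v * \<kappa> * y) + (- v * y\<^sup>2 / 2)"
    by (simp add: field_simps power2_eq_square)
  then have "exp (- v * (real m * \<kappa> + y)\<^sup>2 / 2)
        = exp (real m ^ 2 / 4 * (- 2 * v * \<kappa>\<^sup>2)) * exp (real m * (- v * \<kappa> * y)) * exp (- v * y\<^sup>2 / 2)"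
    by (simp only: exp_add)
  then show ?thesis
    by (simp add: powr_def exp_of_nat_mult[symmetric])
qed

lemma hermite_term_reflection:
  fixes v \<kappa> y :: real
  assumes "v \<noteq> 0" "\<kappa> \<noteq> 0" and k: "2 * k \<le> n"
  defines "q \<equiv> exp (- 2 * v * \<kappa>\<^sup>2)"
  shows "hcoef q n k * exp (- v * (real (n - 2 * k) * \<kappa> + y)\<^sup>2 / 2)
         = q powr (real n ^ 2 / 4) * hcoef (1/q) n k * (q powr (real n - 3)) ^ k
           * exp (- v * \<kappa> * y) ^ (n - 2 * k) * exp (- v * y\<^sup>2 / 2)"
proof -
  have q: "q > 0" "q \<noteq> 1" using assms by (auto simp: q_def)
  have "hcoef q n k * exp (- v * (real (n - 2 * k) * \<kappa> + y)\<^sup>2 / 2)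
        = (hcoef q n k * q powr (real (n - 2 * k) ^ 2 / 4))
          * exp (- v * \<kappa> * y) ^ (n - 2 * k) * exp (- v * y\<^sup>2 / 2)"
    unfolding gaussian_completing_square q_def by (simp only: mult.assoc)
  then show ?thesis
    unfolding hcoef_reflection[OF q k] .
qed

lemma character_times_gauss_chirp:
  "(b * exp (\<i> * complex_of_real (\<kappa> * x))) ^ m * exp (\<i> * complex_of_real (x * y) - complex_of_real (x\<^sup>2 / (2 * v)))
   = b ^ m * gauss_chirp v (real m * \<kappa> + y) x"
proof -
  have "(b * exp (\<i> * complex_of_real (\<kappa> * x))) ^ m
          * exp (\<i> * complex_of_real (x * y) - complex_of_real (x\<^sup>2 / (2 * v)))
        = b ^ m * exp (of_nat m * (\<i> * complex_of_real (\<kappa> * x))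
                       + (\<i> * complex_of_real (x * y) - complex_of_real (x\<^sup>2 / (2 * v))))"
    by (simp add: power_mult_distrib exp_of_nat_mult exp_add)
  also have "of_nat m * (\<i> * complex_of_real (\<kappa> * x))
               + (\<i> * complex_of_real (x * y) - complex_of_real (x\<^sup>2 / (2 * v)))
             = \<i> * complex_of_real ((real m * \<kappa> + y) * x) - complex_of_real (x\<^sup>2 / (2 * v))"
    by (simp add: algebra_simps)
  finally show ?thesis unfolding gauss_chirp_def .
qed

lemma qHermite_gaussian_transform:
  fixes v \<kappa> y r :: real and b w :: complex
  assumes v: "v > 0"
  shows "(LINT x|lborel. qHermite n (b * exp (\<i> * complex_of_real (\<kappa> * x))) w r
                         * exp (\<i> * complex_of_real (x * y) - complex_of_real (x\<^sup>2 / (2 * v))))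
         = (\<Sum>k\<le>n div 2. complex_of_real (hcoef r n k) * w ^ k * b ^ (n - 2 * k)
              * complex_of_real (sqrt (2 * pi * v) * exp (- v * (real (n - 2 * k) * \<kappa> + y)\<^sup>2 / 2)))"
proof -
  let ?chirp = "\<lambda>k. gauss_chirp v (real (n - 2 * k) * \<kappa> + y)"
  have "qHermite n (b * exp (\<i> * complex_of_real (\<kappa> * x))) w r
          * exp (\<i> * complex_of_real (x * y) - complex_of_real (x\<^sup>2 / (2 * v)))
        = (\<Sum>k\<le>n div 2. complex_of_real (hcoef r n k) * w ^ k * b ^ (n - 2 * k) * ?chirp k x)" for x
    unfolding qHermite_def sum_distrib_right
    by (intro sum.cong refl) (simp only: mult.assoc character_times_gauss_chirp)
  then show ?thesis
    using gauss_chirp_integral[OF v]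
    by (simp add: Bochner_Integration.integral_sum integral_mult_right_zero)
qed

theorem mainTheorem11:
  fixes s \<kappa> y :: real and b :: complex and n :: nat
  assumes "s > 0" and "\<kappa> > 0"
  defines "q \<equiv> exp (- 2 * s * \<kappa>\<^sup>2)"
  shows "complex_of_real (1 / sqrt (2 * pi * s)) *
           (LINT x|lborel. qHermite n (b * exp (\<i> * complex_of_real (\<kappa> * x))) (complex_of_real s) q
                           * exp (\<i> * complex_of_real (x * y) - complex_of_real (x\<^sup>2 / (2 * s))))
         = complex_of_real (q powr (real n ^ 2 / 4))
           * qHermite n (b * complex_of_real (exp (- s * \<kappa> * y))) (complex_of_real (q powr (real n - 3) * s)) (1 / q)
           * complex_of_real (exp (- s * y\<^sup>2 / 2))"
proof -
  let ?E = "\<lambda>k. exp (- s * (real (n - 2 * k) * \<kappa> + y)\<^sup>2 / 2)"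
  let ?c = "complex_of_real"
  have sqrt_pos: "sqrt (2 * pi * s) > 0" using assms(1) by simp
  have reflect: "hcoef q n k * ?E k
           = q powr (real n ^ 2 / 4) * hcoef (1/q) n k * (q powr (real n - 3)) ^ k
             * exp (- s * \<kappa> * y) ^ (n - 2 * k) * exp (- s * y\<^sup>2 / 2)" if "k \<in> {..n div 2}" for k
    unfolding q_def by (rule hermite_term_reflection) (use assms that in auto)
  have "?c (1 / sqrt (2 * pi * s)) *
          (LINT x|lborel. qHermite n (b * exp (\<i> * ?c (\<kappa> * x))) (?c s) q
                          * exp (\<i> * ?c (x * y) - ?c (x\<^sup>2 / (2 * s))))
        = (\<Sum>k\<le>n div 2. ?c s ^ k * b ^ (n - 2 * k) * ?c (hcoef q n k * ?E k))"
    unfolding qHermite_gaussian_transform[OF assms(1)] sum_distrib_left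
    using sqrt_pos assms(1) by (intro sum.cong refl) (simp add: field_simps)
  also have "\<dots> = (\<Sum>k\<le>n div 2. ?c s ^ k * b ^ (n - 2 * k)
                     * ?c (q powr (real n ^ 2 / 4) * hcoef (1/q) n k * (q powr (real n - 3)) ^ k
                           * exp (- s * \<kappa> * y) ^ (n - 2 * k) * exp (- s * y\<^sup>2 / 2)))"
    by (intro sum.cong refl) (simp only: reflect)
  also have "\<dots> = ?c (q powr (real n ^ 2 / 4))
           * qHermite n (b * ?c (exp (- s * \<kappa> * y))) (?c (q powr (real n - 3) * s)) (1 / q)
           * ?c (exp (- s * y\<^sup>2 / 2))"
    unfolding qHermite_def sum_distrib_left sum_distrib_right
    by (intro sum.cong refl) (simp add: power_mult_distrib mult_ac)
  finally show ?thesis .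
qed

end
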